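(* Let $E,A,B\in\mathbb{C}^{n,n}$ pairwise commute, $\tau>0$, and assume the initial value problem for the DDAE $E\dot x(t)=Ax(t)+Bx(t-\tau)+f(t)$, $t\in[0,\infty)$, $x|_{[-\tau,0]}=\varphi$, is uniquely solvable (for consistent, sufficiently smooth initial functions). Let $U\in\mathbb{C}^{n,n}$ be nonsingular with $UEU^{-1}=\mathrm{diag}(J^E,N^E_2,N^E_3,N^E_4)$, $UAU^{-1}=\mathrm{diag}(A_1,J^A,N^A_3,N^A_4)$, $UBU^{-1}=\mathrm{diag}(B_1,B_2,J^B,N^B_4)$, where $J^E,J^A,J^B$ are nonsingular and $N^E_2,N^E_3,N^E_4,N^A_3,N^A_4,N^B_4$ are nilpotent. Then the fourth diagonal blocks $N^E_4,N^A_4,N^B_4$ are absent (have size zero); consequently, in the transformed system the equation $N^E_4\dot x_4(t)=N^A_4x_4(t)+N^B_4x_4(t-\tau)+f_4(t)$ does not appear.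
   Context: Solutions are piecewise differentiable: continuous $x$ with $Ex$ piecewise continuously differentiable satisfying the equation for all $t\in[0,\infty)\setminus\bigcup_{j\in\mathbb{N}_0}\{j\tau\}$ (assumed $C^\infty$ on $[0,\infty)$ in the solvability analysis). An initial function is consistent if the IVP has at least one solution. Such a $U$ exists for any pairwise commuting triple. *)

theory Defs
  imports "HOL-Analysis.Analysis"
begin

definition smooth_on :: "real set \<Rightarrow> (real \<Rightarrow> 'a::real_normed_vector) \<Rightarrow> bool" where
  "smooth_on S g \<longleftrightarrow> (\<exists>D :: nat \<Rightarrow> real \<Rightarrow> 'a. D 0 = g \<and>
      (\<forall>k. \<forall>t\<in>S. (D k has_vector_derivative D (Suc k) t) (at t within S)))"

definition ddae_solution ::
  "complex^'n^'n \<Rightarrow> complex^'n^'n \<Rightarrow> complex^'n^'n \<Rightarrow> real \<Rightarrow>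
   (real \<Rightarrow> complex^'n) \<Rightarrow> (real \<Rightarrow> complex^'n) \<Rightarrow> (real \<Rightarrow> complex^'n) \<Rightarrow> bool" where
  "ddae_solution E A B \<tau> f \<phi> x \<longleftrightarrow>
     continuous_on {-\<tau>..} x \<and>
     (\<forall>t\<in>{-\<tau>..0}. x t = \<phi> t) \<and>
     (\<forall>T\<ge>0. (\<lambda>s. E *v x s) piecewise_C1_differentiable_on {0..T}) \<and>
     (\<forall>t. t \<ge> 0 \<longrightarrow> (\<forall>j::nat. t \<noteq> real j * \<tau>) \<longrightarrow>
        ((\<lambda>s. E *v x s) has_vector_derivative (A *v x t + B *v x (t - \<tau>) + f t)) (at t))"

definition consistent_initial ::
  "complex^'n^'n \<Rightarrow> complex^'n^'n \<Rightarrow> complex^'n^'n \<Rightarrow> real \<Rightarrow>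
   (real \<Rightarrow> complex^'n) \<Rightarrow> (real \<Rightarrow> complex^'n) \<Rightarrow> bool" where
  "consistent_initial E A B \<tau> f \<phi> \<longleftrightarrow> (\<exists>x. ddae_solution E A B \<tau> f \<phi> x)"

definition uniquely_solvable ::
  "complex^'n^'n \<Rightarrow> complex^'n^'n \<Rightarrow> complex^'n^'n \<Rightarrow> real \<Rightarrow> bool" where
  "uniquely_solvable E A B \<tau> \<longleftrightarrow>
     (\<forall>f \<phi>. smooth_on {0..} f \<longrightarrow> smooth_on {-\<tau>..0} \<phi> \<longrightarrow>
        consistent_initial E A B \<tau> f \<phi> \<longrightarrow>
        (\<exists>x. ddae_solution E A B \<tau> f \<phi> x \<and>
           (\<forall>y. ddae_solution E A B \<tau> f \<phi> y \<longrightarrow> (\<forall>t\<ge>-\<tau>. y t = x t))))"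

definition matpow :: "'a::semiring_1^'n^'n \<Rightarrow> nat \<Rightarrow> 'a^'n^'n" where
  "matpow M k = ((\<lambda>X. M ** X) ^^ k) (mat 1)"

definition block :: "'a::zero^'n^'n \<Rightarrow> 'n set \<Rightarrow> 'a^'n^'n" where
  "block M I = (\<chi> i j. if i \<in> I \<and> j \<in> I then M $ i $ j else 0)"

definition block_diagonal :: "'a::zero^'n^'n \<Rightarrow> 'n set list \<Rightarrow> bool" where
  "block_diagonal M Is \<longleftrightarrow> (\<forall>i j. (\<not> (\<exists>I\<in>set Is. i \<in> I \<and> j \<in> I)) \<longrightarrow> M $ i $ j = 0)"

text \<open>The list of index sets is a partition of all indices (blocks may be empty).\<close>
definition index_partition :: "'n set list \<Rightarrow> bool" where
  "index_partition Is \<longleftrightarrow> \<Union>(set Is) = UNIV \<and>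
     (\<forall>k<length Is. \<forall>l<length Is. k \<noteq> l \<longrightarrow> Is ! k \<inter> Is ! l = {})"

text \<open>The diagonal block of M on I is nonsingular (as a square matrix indexed by I).\<close>
definition nonsingular_block :: "'a::field^'n^'n \<Rightarrow> 'n set \<Rightarrow> bool" where
  "nonsingular_block M I \<longleftrightarrow> invertible (block M I + block (mat 1) (- I))"

definition nilpotent_block :: "'a::field^'n^'n \<Rightarrow> 'n set \<Rightarrow> bool" where
  "nilpotent_block M I \<longleftrightarrow> (\<exists>k. matpow (block M I) k = 0)"

end

theory Submission
  imports Defs
begin

text \<open>If the fourth block were present, the nilpotent blocks of E, A, B on it, which commute
  because E, A, B do, would have a common nonzero null vector w. Then E, A and B all vanish
  on w, so with zero history and zero inhomogeneity both x = 0 and x t = max t 0 \<cdot> w are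
  solutions, contradicting unique solvability.\<close>

lemma matpow_0 [simp]: "matpow P 0 = mat 1"
  by (simp add: matpow_def)

lemma matpow_Suc: "matpow P (Suc k) = P ** matpow P k"
  by (simp add: matpow_def)

lemma matpow_Suc_right: "matpow P (Suc k) = matpow P k ** P"
  by (induction k) (simp_all add: matpow_Suc matrix_mul_assoc)

lemma matpow_commute:
  fixes F P :: "'a::comm_semiring_1^'n^'n"
  assumes "F ** P = P ** F"
  shows "F ** matpow P k = matpow P k ** F"
proof (induction k)
  case (Suc k)
  have "F ** matpow P (Suc k) = P ** (F ** matpow P k)"
    by (simp add: matpow_Suc matrix_mul_assoc assms)
  also have "\<dots> = matpow P (Suc k) ** F"
    using Suc by (simp add: matpow_Suc matrix_mul_assoc)
  finally show ?case .
qed simp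

lemma nilpotent_last_nonzero_power:
  fixes P :: "'a::comm_semiring_1^'n^'n"
  assumes "v \<noteq> 0" and "matpow P k *v v = 0"
  shows "\<exists>a. matpow P a *v v \<noteq> 0 \<and> P *v (matpow P a *v v) = 0"
  using assms
proof (induction k arbitrary: v)
  case (Suc k)
  show ?case
  proof (cases "P *v v = 0")
    case False
    have "matpow P k *v (P *v v) = 0"
      using Suc.prems(2) by (simp add: matpow_Suc_right matrix_vector_mul_assoc)
    with Suc.IH[OF False] obtain a where
      "matpow P a *v (P *v v) \<noteq> 0" "P *v (matpow P a *v (P *v v)) = 0" by blast
    then show ?thesis
      by (intro exI[of _ "Suc a"]) (simp add: matpow_Suc_right matrix_vector_mul_assoc)
  qed (use Suc.prems in \<open>auto intro: exI[of _ 0]\<close>)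
qed simp

text \<open>Kill the vector with one matrix after the other; since the matrices commute, each step
  keeps the vector in the common kernel of those already treated.\<close>
lemma commuting_nilpotents_common_null_vector:
  fixes Ps :: "('a::comm_semiring_1^'n^'n) set"
  assumes "finite Ps"
    and "\<forall>P\<in>Ps. \<forall>Q\<in>Ps. P ** Q = Q ** P"
    and "\<forall>P\<in>Ps. \<exists>k. matpow P k = 0"
    and "\<forall>P\<in>Ps. \<forall>u\<in>S. P *v u \<in> S"
    and "v \<in> S" "v \<noteq> 0"
  shows "\<exists>w\<in>S. w \<noteq> 0 \<and> (\<forall>P\<in>Ps. P *v w = 0)"
  using assms
proof (induction Ps rule: finite_induct)
  case empty
  then show ?case by blast
next
  case (insert P Ps)
  then obtain w where w: "w \<in> S" "w \<noteq> 0" "\<forall>Q\<in>Ps. Q *v w = 0"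
    by (metis insert_iff)
  obtain k where "matpow P k = 0"
    using insert.prems(2) by blast
  with nilpotent_last_nonzero_power[OF w(2), of P k] obtain a where a:
    "matpow P a *v w \<noteq> 0" "P *v (matpow P a *v w) = 0" by auto
  have "matpow P a *v w \<in> S" for a
  proof (induction a)
    case (Suc a)
    then show ?case
      using insert.prems(3) by (simp add: matpow_Suc matrix_vector_mul_assoc[symmetric])
  qed (simp add: w(1))
  moreover have "Q *v (matpow P a *v w) = 0" if "Q \<in> Ps" for Q
  proof -
    have "Q ** P = P ** Q"
      using insert.prems(1) that by blast
    then have "Q *v (matpow P a *v w) = matpow P a *v (Q *v w)"
      by (simp add: matrix_vector_mul_assoc matpow_commute)
    then show ?thesis
      using w(3) that by simp
  qed
  ultimately show ?case
    using a by blast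
qed

lemma block_diagonal_off_block_zero:
  assumes "block_diagonal M Is" "index_partition Is" "I \<in> set Is"
    and "(i \<in> I) \<noteq> (j \<in> I)"
  shows "M $ i $ j = 0"
proof -
  have "\<not> (i \<in> J \<and> j \<in> J)" if "J \<in> set Is" for J
  proof -
    obtain k l where "k < length Is" "Is ! k = I" "l < length Is" "Is ! l = J"
      using \<open>I \<in> set Is\<close> \<open>J \<in> set Is\<close> by (metis in_set_conv_nth)
    then show ?thesis
      using assms(2,4) unfolding index_partition_def by (cases "k = l") auto
  qed
  then show ?thesis
    using assms(1) unfolding block_diagonal_def by blast
qed

lemma block_mult:
  fixes M N :: "'a::comm_semiring_1^'n^'n"
  assumes "\<forall>i k. i \<in> I \<longrightarrow> k \<notin> I \<longrightarrow> M $ i $ k = 0"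
  shows "block M I ** block N I = block (M ** N) I"
proof -
  have "(\<Sum>k\<in>UNIV. M $ i $ k * N $ k $ j) = (\<Sum>k\<in>UNIV. if k \<in> I then M $ i $ k * N $ k $ j else 0)"
    if "i \<in> I" for i j
    using assms that by (intro sum.cong) auto
  then show ?thesis
    unfolding block_def matrix_matrix_mult_def vec_eq_iff
    by (auto simp: if_distrib[where f="\<lambda>x. x * _"] cong: if_cong)
qed

lemma matrix_vector_mult_block:
  fixes M :: "'a::comm_semiring_1^'n^'n"
  assumes "\<forall>i k. i \<notin> I \<longrightarrow> k \<in> I \<longrightarrow> M $ i $ k = 0"
    and "\<forall>k. k \<notin> I \<longrightarrow> w $ k = 0"
  shows "M *v w = block M I *v w"
proof -
  have "M $ i $ k * w $ k = (if i \<in> I \<and> k \<in> I then M $ i $ k else 0) * w $ k" for i k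
    using assms by (cases "k \<in> I") auto
  then show ?thesis
    unfolding matrix_vector_mult_def block_def vec_eq_iff by simp
qed

lemma matrix_inv_mult:
  fixes U :: "'a::semiring_1^'n^'n"
  assumes "invertible U"
  shows "U ** matrix_inv U = mat 1" "matrix_inv U ** U = mat 1"
  using someI_ex[OF assms[unfolded invertible_def]] unfolding matrix_inv_def by auto

lemma similarity_mult:
  fixes U X Y :: "'a::semiring_1^'n^'n"
  assumes "invertible U"
  shows "(U ** X ** matrix_inv U) ** (U ** Y ** matrix_inv U) = U ** (X ** Y) ** matrix_inv U"
proof -
  have "(U ** X ** matrix_inv U) ** (U ** Y ** matrix_inv U)
      = U ** X ** (matrix_inv U ** U) ** Y ** matrix_inv U"
    by (simp add: matrix_mul_assoc)
  then show ?thesis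
    using matrix_inv_mult[OF assms] by (simp add: matrix_mul_assoc)
qed

lemma matrix_vector_mult_similarity:
  fixes U X :: "'a::semiring_1^'n^'n"
  assumes "invertible U"
  shows "X *v (matrix_inv U *v w) = matrix_inv U *v ((U ** X ** matrix_inv U) *v w)"
proof -
  have "matrix_inv U ** (U ** X ** matrix_inv U) = X ** matrix_inv U"
    using matrix_inv_mult[OF assms] by (simp add: matrix_mul_assoc)
  then show ?thesis
    by (simp add: matrix_vector_mul_assoc)
qed

lemma matrix_vector_mult_scaleR:
  fixes E :: "complex^'n^'n"
  shows "E *v (c *\<^sub>R w) = c *\<^sub>R (E *v w)"
  unfolding vec_eq_iff matrix_vector_mult_def
  by (auto simp: scaleR_sum_right intro!: sum.cong)

lemma smooth_on_zero: "smooth_on S (\<lambda>_. 0)"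
  unfolding smooth_on_def by (intro exI[of _ "\<lambda>k t. 0"]) auto

lemma common_null_vector_not_uniquely_solvable:
  fixes E A B :: "complex^'n^'n"
  assumes "\<tau> > 0" "w \<noteq> 0" "E *v w = 0" "A *v w = 0" "B *v w = 0"
  shows "\<not> uniquely_solvable E A B \<tau>"
proof
  assume uniq: "uniquely_solvable E A B \<tau>"
  define zero :: "real \<Rightarrow> complex^'n" where "zero = (\<lambda>_. 0)"
  have ramp: "ddae_solution E A B \<tau> zero zero (\<lambda>t. max t 0 *\<^sub>R w)"
  proof -
    have "(\<lambda>s. E *v (max s 0 *\<^sub>R w)) = (\<lambda>s. 0)"
      using assms(3) by (simp add: matrix_vector_mult_scaleR)
    then show ?thesis
      using assms unfolding ddae_solution_def zero_def
      by (auto simp: matrix_vector_mult_scaleR piecewise_C1_differentiable_const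
          intro!: continuous_intros)
  qed
  have trivial: "ddae_solution E A B \<tau> zero zero zero"
    unfolding ddae_solution_def zero_def by (auto simp: piecewise_C1_differentiable_const)
  then have "consistent_initial E A B \<tau> zero zero"
    unfolding consistent_initial_def by blast
  then obtain x where "\<forall>y. ddae_solution E A B \<tau> zero zero y \<longrightarrow> (\<forall>t\<ge>-\<tau>. y t = x t)"
    using uniq smooth_on_zero unfolding uniquely_solvable_def zero_def by blast
  moreover have "1 \<ge> - \<tau>"
    using assms(1) by simp
  ultimately have "max 1 0 *\<^sub>R w = zero 1"
    using ramp trivial by metis
  then show False
    using assms(2) by (simp add: zero_def)
qed

lemma commuting_nilpotent_blocks_common_null_vector:
  fixes E A B U :: "complex^'n^'n"
  assumes comm_EA: "E ** A = A ** E"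
    and comm_EB: "E ** B = B ** E"
    and comm_AB: "A ** B = B ** A"
    and U_inv: "invertible U"
    and part: "index_partition Is"
    and "I \<in> set Is" "I \<noteq> {}"
    and E_diag: "block_diagonal (U ** E ** matrix_inv U) Is"
    and A_diag: "block_diagonal (U ** A ** matrix_inv U) Is"
    and B_diag: "block_diagonal (U ** B ** matrix_inv U) Is"
    and NE: "nilpotent_block (U ** E ** matrix_inv U) I"
    and NA: "nilpotent_block (U ** A ** matrix_inv U) I"
    and NB: "nilpotent_block (U ** B ** matrix_inv U) I"
  shows "\<exists>v. v \<noteq> 0 \<and> E *v v = 0 \<and> A *v v = 0 \<and> B *v v = 0"
proof -
  obtain i0 where "i0 \<in> I"
    using \<open>I \<noteq> {}\<close> by blast
  define conj where "conj X = U ** X ** matrix_inv U" for X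
  define S where "S = {u :: complex^'n. \<forall>k. k \<notin> I \<longrightarrow> u $ k = 0}"
  define Ps where "Ps = {block (conj E) I, block (conj A) I, block (conj B) I}"
  have off_block: "(i \<in> I) \<noteq> (k \<in> I) \<Longrightarrow> conj X $ i $ k = 0"
    if "X \<in> {E, A, B}" for X i k
    using that block_diagonal_off_block_zero[OF _ part \<open>I \<in> set Is\<close>] E_diag A_diag B_diag
    unfolding conj_def by auto
  have conj_mult: "conj X ** conj Y = conj (X ** Y)" for X Y
    unfolding conj_def using similarity_mult[OF U_inv] .
  have "finite Ps"
    by (simp add: Ps_def)
  moreover have "\<forall>P\<in>Ps. \<forall>Q\<in>Ps. P ** Q = Q ** P"
    using off_block comm_EA comm_EB comm_AB by (auto simp: Ps_def block_mult conj_mult)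
  moreover have "\<forall>P\<in>Ps. \<exists>k. matpow P k = 0"
    using NE NA NB unfolding Ps_def conj_def nilpotent_block_def by auto
  moreover have "\<forall>P\<in>Ps. \<forall>u\<in>S. P *v u \<in> S"
    unfolding Ps_def S_def by (auto simp: block_def matrix_vector_mult_def)
  moreover have "axis i0 (1::complex) \<in> S"
    using \<open>i0 \<in> I\<close> by (simp add: S_def axis_def)
  moreover have "axis i0 (1::complex) \<noteq> 0"
    by simp
  ultimately have "\<exists>w\<in>S. w \<noteq> 0 \<and> (\<forall>P\<in>Ps. P *v w = 0)"
    by (rule commuting_nilpotents_common_null_vector)
  then obtain w where w: "w \<in> S" "w \<noteq> 0" "\<forall>P\<in>Ps. P *v w = 0"
    by blast
  have "X *v (matrix_inv U *v w) = 0" if "X \<in> {E, A, B}" for X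
  proof -
    have "conj X *v w = block (conj X) I *v w"
      using w(1) off_block[OF that] by (intro matrix_vector_mult_block) (auto simp: S_def)
    also have "\<dots> = 0"
      using w(3) that unfolding Ps_def by blast
    finally show ?thesis
      by (simp add: matrix_vector_mult_similarity[OF U_inv] conj_def)
  qed
  moreover have "matrix_inv U *v w \<noteq> 0"
    using w(2) matrix_inv_mult(1)[OF U_inv]
    by (metis matrix_vector_mul_assoc matrix_vector_mul_lid matrix_vector_mult_0_right)
  ultimately show ?thesis
    by blast
qed

theorem corollary4:
  fixes E A B U :: "complex^'n^'n" and \<tau> :: real and I1 I2 I3 I4 :: "'n set"
  assumes comm_EA: "E ** A = A ** E"
    and comm_EB: "E ** B = B ** E"
    and comm_AB: "A ** B = B ** A"
    and tau_pos: "\<tau> > 0"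
    and uniq: "uniquely_solvable E A B \<tau>"
    and U_inv: "invertible U"
    and part: "index_partition [I1, I2, I3, I4]"
    and E_diag: "block_diagonal (U ** E ** matrix_inv U) [I1, I2, I3, I4]"
    and A_diag: "block_diagonal (U ** A ** matrix_inv U) [I1, I2, I3, I4]"
    and B_diag: "block_diagonal (U ** B ** matrix_inv U) [I1, I2, I3, I4]"
    and JE: "nonsingular_block (U ** E ** matrix_inv U) I1"
    and NE2: "nilpotent_block (U ** E ** matrix_inv U) I2"
    and NE3: "nilpotent_block (U ** E ** matrix_inv U) I3"
    and NE4: "nilpotent_block (U ** E ** matrix_inv U) I4"
    and JA: "nonsingular_block (U ** A ** matrix_inv U) I2"
    and NA3: "nilpotent_block (U ** A ** matrix_inv U) I3"
    and NA4: "nilpotent_block (U ** A ** matrix_inv U) I4"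
    and JB: "nonsingular_block (U ** B ** matrix_inv U) I3"
    and NB4: "nilpotent_block (U ** B ** matrix_inv U) I4"
  shows "I4 = {}"
proof (rule ccontr)
  assume "I4 \<noteq> {}"
  then obtain v where "v \<noteq> 0" "E *v v = 0" "A *v v = 0" "B *v v = 0"
    using commuting_nilpotent_blocks_common_null_vector[OF comm_EA comm_EB comm_AB U_inv part _ _
        E_diag A_diag B_diag NE4 NA4 NB4] by auto
  then show False
    using common_null_vector_not_uniquely_solvable[OF tau_pos] uniq by blast
qed

end
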